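(* Let $(L,\le,(\sqsubseteq_\alpha)_{\alpha<\kappa})$ be a model of Axioms 1–4. Let $\alpha\le\kappa$, let $(x_\beta)_{\beta<\alpha}$ be a partial compatible sequence, and let $x=\bigvee_{\beta<\alpha}x_\beta$. If $z\in L$ satisfies $x_\beta\sqsubseteq_\beta z$ for all $\beta<\alpha$, then $x\sqsubseteq z$.
   Context: Setting (model of Axioms 1–4). Let $(L,\le)$ be a complete lattice with join operation $\bigvee$ and least element $\perp$. Let $\kappa>0$ be an ordinal, and for each ordinal $\alpha<\kappa$ let $\sqsubseteq_\alpha$ be a preorder on $L$. Derived relations: - $x=_\alpha y$ means $x\sqsubseteq_\alpha y$ and $y\sqsubseteq_\alpha x$. - $x\sqsubset_\alpha y$ means $x\sqsubseteq_\alpha y$ and not $x=_\alpha y$. - $\sqsubset=\bigcup_{\alpha<\kappa}\sqsubset_\alpha$. - $x\sqsubseteq y$ means $x\sqsubset y$ or $x=y$. Derived sets, for $x\in L$ and $\alpha<\kappa$: - $(x]_\alpha=\{y\in L:\forall\beta<\alpha,\ x=_\beta y\}$. - $[x]_\alpha=\{y\in L: x=_\alpha y\}$. For a set $X$, $X\sqsubseteq_\alpha y$ means $x\sqsubseteq_\alpha y$ for all $x\in X$. The structure is a model of Axioms 1–4 if: - (A1) for all $\alpha<\beta<\kappa$, $x\sqsubseteq_\beta y$ implies $x=_\alpha y$; - (A2) $\bigcap_{\alpha<\kappa}=_\alpha$ is the identity relation on $L$; - (A3) for every $x\in L$, every $\alpha<\kappa$ and every $X\subseteq(x]_\alpha$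 there is $y\in(x]_\alpha$ with $X\sqsubseteq_\alpha y$ such that for all $z\in(x]_\alpha$ with $X\sqsubseteq_\alpha z$ we have $y\sqsubseteq_\alpha z$ and $y\le z$; - (A4) for every nonempty $X\subseteq L$, every $\alpha<\kappa$ and every $y\in L$, if $y=_\alpha x$ for all $x\in X$ then $y=_\alpha\bigvee X$. For an ordinal $\alpha\le\kappa$, a sequence $(x_\beta)_{\beta<\alpha}$ is a partial compatible sequence if each $x_\beta$ is the $\le$-least element of $[x_\beta]_\beta$ and $x_\beta=_\beta x_\gamma$ for all $\beta<\gamma<\alpha$. *)

theory Defs
  imports Main
begin

text \<open>Ordinals below kappa are represented by the elements of a nonempty
well-ordered type 'k (every well-order is isomorphic to an ordinal; kappa > 0
corresponds to the type being nonempty). An ordinal alpha \<le> kappa is represented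
by the initial segment {beta. beta < alpha} of 'k, i.e. by a downward closed
subset of 'k (possibly all of 'k, which represents alpha = kappa).
R alpha is the preorder \<sqsubseteq>_alpha.\<close>

definition eqa :: "('k \<Rightarrow> 'a \<Rightarrow> 'a \<Rightarrow> bool) \<Rightarrow> 'k \<Rightarrow> 'a \<Rightarrow> 'a \<Rightarrow> bool" where
  "eqa R \<alpha> x y \<longleftrightarrow> R \<alpha> x y \<and> R \<alpha> y x"

definition lta :: "('k \<Rightarrow> 'a \<Rightarrow> 'a \<Rightarrow> bool) \<Rightarrow> 'k \<Rightarrow> 'a \<Rightarrow> 'a \<Rightarrow> bool" where
  "lta R \<alpha> x y \<longleftrightarrow> R \<alpha> x y \<and> \<not> eqa R \<alpha> x y"

definition lt_all :: "('k \<Rightarrow> 'a \<Rightarrow> 'a \<Rightarrow> bool) \<Rightarrow> 'a \<Rightarrow> 'a \<Rightarrow> bool" where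
  "lt_all R x y \<longleftrightarrow> (\<exists>\<alpha>. lta R \<alpha> x y)"

definition le_all :: "('k \<Rightarrow> 'a \<Rightarrow> 'a \<Rightarrow> bool) \<Rightarrow> 'a \<Rightarrow> 'a \<Rightarrow> bool" where
  "le_all R x y \<longleftrightarrow> lt_all R x y \<or> x = y"

definition downcls :: "('k::wellorder \<Rightarrow> 'a \<Rightarrow> 'a \<Rightarrow> bool) \<Rightarrow> 'a \<Rightarrow> 'k \<Rightarrow> 'a set" where
  "downcls R x \<alpha> = {y. \<forall>\<beta><\<alpha>. eqa R \<beta> x y}"

definition eqcls :: "('k \<Rightarrow> 'a \<Rightarrow> 'a \<Rightarrow> bool) \<Rightarrow> 'a \<Rightarrow> 'k \<Rightarrow> 'a set" where
  "eqcls R x \<alpha> = {y. eqa R \<alpha> x y}"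

definition model_A1_4 :: "('k::wellorder \<Rightarrow> 'a::complete_lattice \<Rightarrow> 'a \<Rightarrow> bool) \<Rightarrow> bool" where
  "model_A1_4 R \<longleftrightarrow>
     (\<forall>\<alpha>. (\<forall>x. R \<alpha> x x) \<and> (\<forall>x y z. R \<alpha> x y \<longrightarrow> R \<alpha> y z \<longrightarrow> R \<alpha> x z)) \<and>
     (\<forall>\<alpha> \<beta> x y. \<alpha> < \<beta> \<longrightarrow> R \<beta> x y \<longrightarrow> eqa R \<alpha> x y) \<and>
     (\<forall>x y. (\<forall>\<alpha>. eqa R \<alpha> x y) \<longrightarrow> x = y) \<and>
     (\<forall>x \<alpha> X. X \<subseteq> downcls R x \<alpha> \<longrightarrow>
        (\<exists>y\<in>downcls R x \<alpha>. (\<forall>u\<in>X. R \<alpha> u y) \<and>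
            (\<forall>z\<in>downcls R x \<alpha>. (\<forall>u\<in>X. R \<alpha> u z) \<longrightarrow> R \<alpha> y z \<and> y \<le> z))) \<and>
     (\<forall>X \<alpha> y. X \<noteq> {} \<longrightarrow> (\<forall>x\<in>X. eqa R \<alpha> y x) \<longrightarrow> eqa R \<alpha> y (Sup X))"

definition init_seg :: "'k::wellorder set \<Rightarrow> bool" where
  "init_seg I \<longleftrightarrow> (\<forall>\<beta>\<in>I. \<forall>\<gamma>. \<gamma> < \<beta> \<longrightarrow> \<gamma> \<in> I)"

definition partial_compatible :: "('k::wellorder \<Rightarrow> 'a::complete_lattice \<Rightarrow> 'a \<Rightarrow> bool) \<Rightarrow> 'k set \<Rightarrow> ('k \<Rightarrow> 'a) \<Rightarrow> bool" where
  "partial_compatible R I xs \<longleftrightarrow>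
     (\<forall>\<beta>\<in>I. xs \<beta> \<in> eqcls R (xs \<beta>) \<beta> \<and> (\<forall>y\<in>eqcls R (xs \<beta>) \<beta>. xs \<beta> \<le> y)) \<and>
     (\<forall>\<beta>\<in>I. \<forall>\<gamma>\<in>I. \<beta> < \<gamma> \<longrightarrow> eqa R \<beta> (xs \<beta>) (xs \<gamma>))"

end

theory Submission
  imports Defs
begin

text \<open>Each x_\<beta> is \<le>-least in its =_\<beta>-class and x_\<beta> =_\<beta> x_\<gamma> for \<beta> < \<gamma>, so the
  sequence is \<le>-increasing; hence its join x is also the join of every tail (x_\<gamma>)_{\<beta> \<le> \<gamma>}, all
  of whose terms are =_\<beta>-equivalent to x_\<beta>, and Axiom 4 gives x =_\<beta> x_\<beta>.
  If x \<noteq> z, let \<alpha> be the least level with \<not> x =_\<alpha> z, so that z \<in> (x]_\<alpha>. If \<alpha> is below the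
  length of the sequence, x =_\<alpha> x_\<alpha> \<sqsubseteq>_\<alpha> z. Otherwise every y \<in> (x]_\<alpha> satisfies
  y =_\<beta> x =_\<beta> x_\<beta>, hence x_\<beta> \<le> y, for all \<beta>; so x is the \<le>-least element of (x]_\<alpha>, which by
  Axiom 3 (with X = {}) is also \<sqsubseteq>_\<alpha>-below all of (x]_\<alpha>, in particular below z.
  Either way x \<sqsubset>_\<alpha> z.\<close>

lemma
  assumes "model_A1_4 R"
  shows model_A1_4_refl: "R \<alpha> x x"
    and model_A1_4_trans: "R \<alpha> x y \<Longrightarrow> R \<alpha> y z \<Longrightarrow> R \<alpha> x z"
    and model_A1_4_eq_if_eqa_all: "(\<And>\<alpha>. eqa R \<alpha> x y) \<Longrightarrow> x = y"
    and model_A1_4_downcls_least: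
      "\<exists>y\<in>downcls R x \<alpha>. \<forall>w\<in>downcls R x \<alpha>. R \<alpha> y w \<and> y \<le> w"
    and model_A1_4_eqa_Sup:
      "X \<noteq> {} \<Longrightarrow> (\<And>x. x \<in> X \<Longrightarrow> eqa R \<alpha> y x) \<Longrightarrow> eqa R \<alpha> y (Sup X)"
proof -
  note axioms = assms[unfolded model_A1_4_def]
  show "R \<alpha> x x" using axioms by simp
  show "R \<alpha> x y \<Longrightarrow> R \<alpha> y z \<Longrightarrow> R \<alpha> x z" using axioms by metis
  show "(\<And>\<alpha>. eqa R \<alpha> x y) \<Longrightarrow> x = y" using axioms by metis
  show "\<exists>y\<in>downcls R x \<alpha>. \<forall>w\<in>downcls R x \<alpha>. R \<alpha> y w \<and> y \<le> w"
    using axioms by (metis empty_iff empty_subsetI)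
  show "X \<noteq> {} \<Longrightarrow> (\<And>x. x \<in> X \<Longrightarrow> eqa R \<alpha> y x) \<Longrightarrow> eqa R \<alpha> y (Sup X)"
    using axioms by metis
qed

lemma model_A1_4_eqa_trans:
  "model_A1_4 R \<Longrightarrow> eqa R \<alpha> x y \<Longrightarrow> eqa R \<alpha> y z \<Longrightarrow> eqa R \<alpha> x z"
  unfolding eqa_def using model_A1_4_trans by blast

lemma self_in_downcls: "model_A1_4 R \<Longrightarrow> x \<in> downcls R x \<alpha>"
  unfolding downcls_def eqa_def by (simp add: model_A1_4_refl)

lemma R_if_le_least_in_downcls:
  assumes "model_A1_4 R" "\<And>w. w \<in> downcls R x \<alpha> \<Longrightarrow> x \<le> w" "w \<in> downcls R x \<alpha>"
  shows "R \<alpha> x w"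
proof -
  obtain y where y: "y \<in> downcls R x \<alpha>" "\<And>w. w \<in> downcls R x \<alpha> \<Longrightarrow> R \<alpha> y w \<and> y \<le> w"
    using model_A1_4_downcls_least[OF assms(1)] by blast
  have "y = x"
    using y assms(2) self_in_downcls[OF assms(1)] by (meson antisym)
  then show ?thesis using y(2) assms(3) by blast
qed

lemma Sup_image_tail:
  fixes f :: "'k::linorder \<Rightarrow> 'a::complete_lattice"
  assumes "mono_on I f" "b \<in> I"
  shows "Sup (f ` {c \<in> I. b \<le> c}) = Sup (f ` I)"
proof (rule antisym)
  show "Sup (f ` {c \<in> I. b \<le> c}) \<le> Sup (f ` I)"
    by (rule Sup_subset_mono) blast
  show "Sup (f ` I) \<le> Sup (f ` {c \<in> I. b \<le> c})"
  proof (rule Sup_least)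
    fix u assume "u \<in> f ` I"
    then obtain c where c: "c \<in> I" "u = f c" by blast
    show "u \<le> Sup (f ` {c \<in> I. b \<le> c})"
    proof (cases "b \<le> c")
      case True
      then show ?thesis using c by (auto intro: Sup_upper)
    next
      case False
      then have "f c \<le> f b" using assms c by (auto intro: mono_onD)
      also have "f b \<le> Sup (f ` {c \<in> I. b \<le> c})" using assms(2) by (auto intro: Sup_upper)
      finally show ?thesis using c by simp
    qed
  qed
qed

lemma partial_compatible_least:
  "partial_compatible R I xs \<Longrightarrow> \<beta> \<in> I \<Longrightarrow> eqa R \<beta> (xs \<beta>) y \<Longrightarrow> xs \<beta> \<le> y"
  unfolding partial_compatible_def eqcls_def by blast

lemma partial_compatible_eqa:
  "partial_compatible R I xs \<Longrightarrow> \<beta> \<in> I \<Longrightarrow> \<gamma> \<in> I \<Longrightarrow> \<beta> < \<gamma> \<Longrightarrow> eqa R \<beta> (xs \<beta>) (xs \<gamma>)"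
  unfolding partial_compatible_def by blast

lemma partial_compatible_mono_on:
  assumes "partial_compatible R I xs"
  shows "mono_on I xs"
proof (rule mono_onI)
  fix \<beta> \<gamma> assume "\<beta> \<in> I" "\<gamma> \<in> I" "\<beta> \<le> \<gamma>"
  then show "xs \<beta> \<le> xs \<gamma>"
    using partial_compatible_least[OF assms] partial_compatible_eqa[OF assms]
    by (cases "\<beta> = \<gamma>") auto
qed

lemma partial_compatible_eqa_Sup:
  assumes "model_A1_4 R" "partial_compatible R I xs" "\<beta> \<in> I"
  shows "eqa R \<beta> (xs \<beta>) (Sup (xs ` I))"
proof -
  have "eqa R \<beta> (xs \<beta>) (Sup (xs ` {\<gamma> \<in> I. \<beta> \<le> \<gamma>}))"
  proof (rule model_A1_4_eqa_Sup[OF assms(1)])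
    show "xs ` {\<gamma> \<in> I. \<beta> \<le> \<gamma>} \<noteq> {}" using assms(3) by blast
    fix y assume "y \<in> xs ` {\<gamma> \<in> I. \<beta> \<le> \<gamma>}"
    then obtain \<gamma> where "\<gamma> \<in> I" "\<beta> \<le> \<gamma>" "y = xs \<gamma>" by blast
    then show "eqa R \<beta> (xs \<beta>) y"
      using partial_compatible_eqa[OF assms(2) assms(3)] model_A1_4_refl[OF assms(1)]
      by (cases "\<beta> = \<gamma>") (auto simp: eqa_def)
  qed
  then show ?thesis
    using Sup_image_tail[OF partial_compatible_mono_on[OF assms(2)] assms(3)] by simp
qed

lemma partial_compatible_Sup_le_downcls:
  assumes "model_A1_4 R" "partial_compatible R I xs" "I \<subseteq> {..<\<alpha>}"
    and "w \<in> downcls R (Sup (xs ` I)) \<alpha>"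
  shows "Sup (xs ` I) \<le> w"
proof (rule Sup_least)
  fix u assume "u \<in> xs ` I"
  then obtain \<beta> where \<beta>: "\<beta> \<in> I" "u = xs \<beta>" by blast
  have "eqa R \<beta> (Sup (xs ` I)) w"
    using assms(3,4) \<beta>(1) unfolding downcls_def by blast
  then have "eqa R \<beta> (xs \<beta>) w"
    using model_A1_4_eqa_trans[OF assms(1)] partial_compatible_eqa_Sup[OF assms(1,2) \<beta>(1)] by blast
  then show "u \<le> w" using partial_compatible_least[OF assms(2) \<beta>(1)] \<beta>(2) by blast
qed

theorem mainTheorem12:
  fixes R :: "'k::wellorder \<Rightarrow> 'a::complete_lattice \<Rightarrow> 'a \<Rightarrow> bool"
    and I :: "'k set" and xs :: "'k \<Rightarrow> 'a" and z :: 'a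
  assumes "model_A1_4 R"
    and "init_seg I"
    and "partial_compatible R I xs"
    and "\<forall>\<beta>\<in>I. R \<beta> (xs \<beta>) z"
  shows "le_all R (Sup (xs ` I)) z"
proof (cases "\<forall>\<alpha>. eqa R \<alpha> (Sup (xs ` I)) z")
  case True
  then show ?thesis using model_A1_4_eq_if_eqa_all[OF assms(1)] unfolding le_all_def by blast
next
  case False
  define x where "x = Sup (xs ` I)"
  define \<alpha> where "\<alpha> = (LEAST \<alpha>. \<not> eqa R \<alpha> x z)"
  have not_eqa: "\<not> eqa R \<alpha> x z"
    unfolding \<alpha>_def by (rule LeastI_ex) (use False x_def in blast)
  have z_in: "z \<in> downcls R x \<alpha>"
    unfolding downcls_def \<alpha>_def using not_less_Least by blast
  have "R \<alpha> x z"
  proof (cases "\<alpha> \<in> I")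
    case True
    then show ?thesis
      using partial_compatible_eqa_Sup[OF assms(1,3) True] assms(4) model_A1_4_trans[OF assms(1)]
      unfolding eqa_def x_def by blast
  next
    case False
    with assms(2) have "I \<subseteq> {..<\<alpha>}"
      unfolding init_seg_def by (metis lessThan_iff not_less_iff_gr_or_eq subsetI)
    then show ?thesis
      using R_if_le_least_in_downcls[OF assms(1) _ z_in]
        partial_compatible_Sup_le_downcls[OF assms(1,3)] x_def by blast
  qed
  with not_eqa show ?thesis
    unfolding le_all_def lt_all_def lta_def x_def by blast
qed

end
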